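(* Let $\Lambda\subset\mathbb{D}$ be discrete and $f:\mathbb{D}\setminus\Lambda\to\mathbb{C}$. (1) Let $w_1,\dots,w_k\in\mathbb{D}$ (not necessarily distinct, and possibly meeting $\Lambda$), and let $g$ be defined on $(\mathbb{D}\setminus\Lambda)\cup\{w_1,\dots,w_k\}$ with $g=f$ on $\mathbb{D}\setminus\Lambda$. Then for every $n\ge1$, $$\mathbf{k}_n(f)\le\mathbf{k}_n(g)\le\max_{0\le r\le\min\{k,n\}}\{\mathbf{k}_{n-r}(f)+r\}\le\mathbf{k}_n(f)+k.$$ (2) If $g$ is defined on $\mathbb{D}\setminus\Lambda$ and $g(z)=f(z)$ for all $z\in\mathbb{D}\setminus\Lambda$ except at $k$ distinct points $z_1,\dots,z_k\in\mathbb{D}\setminus\Lambda$, then $\mathbf{k}_n(g)\le\mathbf{k}_n(f)+k$ for every $n\ge1$.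
   Context: $\mathbb{D}$ is the open unit disk; a set $\Lambda\subset\mathbb{D}$ is discrete if it is at most countable with accumulation points only on the unit circle. Pick matrix: $P_n(f;z_1,\dots,z_n)=\left[\frac{1-f(z_i)\overline{f(z_j)}}{1-z_i\overline{z_j}}\right]_{i,j=1}^n$ for distinct $z_i\in\mathrm{Dom}(f)$. $\mathrm{sq}_-P$ = number of negative eigenvalues (with multiplicity) of a Hermitian $P$. $\mathbf{k}_n(f)=\max\mathrm{sq}_-P_n(f;z_1,\dots,z_n)$ over distinct $z_1,\dots,z_n\in\mathrm{Dom}(f)$, and $\mathbf{k}_0(f)=0$. *)

theory Defs
  imports "HOL-Analysis.Analysis" "Jordan_Normal_Form.Char_Poly"
begin

definition disk_discrete :: "complex set \<Rightarrow> bool" where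
  "disk_discrete L \<longleftrightarrow> L \<subseteq> ball 0 1 \<and> countable L \<and> (\<forall>z\<in>ball 0 1. \<not> z islimpt L)"

definition pick_matrix :: "(complex \<Rightarrow> complex) \<Rightarrow> complex list \<Rightarrow> complex mat" where
  "pick_matrix f zs = mat (length zs) (length zs)
     (\<lambda>(i,j). (1 - f (zs ! i) * cnj (f (zs ! j))) / (1 - zs ! i * cnj (zs ! j)))"

text \<open>Number of negative eigenvalues counted with (algebraic) multiplicity;
  for Hermitian matrices all eigenvalues are real.\<close>
definition sq_minus :: "complex mat \<Rightarrow> nat" where
  "sq_minus A = (\<Sum>r\<in>{r::real. r < 0 \<and> poly (char_poly A) (complex_of_real r) = 0}.
                    order (complex_of_real r) (char_poly A))"

definition kappa :: "complex set \<Rightarrow> (complex \<Rightarrow> complex) \<Rightarrow> nat \<Rightarrow> nat" where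
  "kappa D f n = Sup {sq_minus (pick_matrix f zs) | zs. length zs = n \<and> distinct zs \<and> set zs \<subseteq> D}"

end

theory Submission
  imports Defs "Jordan_Normal_Form.Schur_Decomposition" "Jordan_Normal_Form.Spectral_Radius"
begin

(* The number of negative eigenvalues of a Hermitian matrix is the largest dimension of a
   subspace on which its form is negative definite (spectral theorem). For Pick matrices this
   is a property of the Pick kernel on the finite point set, which survives enlarging the set,
   while deleting one point costs at most one dimension: combine the generators so that all but
   one vanish at that point. So among n points of the domain of g, discarding the r points
   outside the disk minus Lambda loses at most r negative squares, and changing f at k points
   changes k_n by at most k. *)

section \<open>Unitary diagonalization of Hermitian matrices\<close>

lemma index_mult_mat_sum:
  assumes "A \<in> carrier_mat a b" "B \<in> carrier_mat b c" "i < a" "j < c"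
  shows "(A * B) $$ (i,j) = (\<Sum>k<b. A $$ (i,k) * B $$ (k,j))"
  using assms by (auto simp: scalar_prod_def lessThan_atLeast0 intro!: sum.cong)

lemma mat_adjoint_index [simp]:
  "i < dim_col A \<Longrightarrow> j < dim_row A \<Longrightarrow> mat_adjoint A $$ (i,j) = conjugate (A $$ (j,i))"
  "dim_row (mat_adjoint A) = dim_col A" "dim_col (mat_adjoint A) = dim_row A"
  by (simp_all add: mat_adjoint_def mat_of_rows_index)

lemma mat_adjoint_carrier [simp]: "A \<in> carrier_mat a b \<Longrightarrow> mat_adjoint A \<in> carrier_mat b a"
  unfolding carrier_mat_def by simp

lemma mat_adjoint_adjoint [simp]: "mat_adjoint (mat_adjoint A) = A"
  by (rule eq_matI) simp_all

lemma mat_adjoint_mult: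
  fixes A :: "'a::conjugatable_field mat"
  assumes "A \<in> carrier_mat a b" "B \<in> carrier_mat b c"
  shows "mat_adjoint (A * B) = mat_adjoint B * mat_adjoint A"
proof (rule eq_matI)
  fix i j assume "i < dim_row (mat_adjoint B * mat_adjoint A)" "j < dim_col (mat_adjoint B * mat_adjoint A)"
  then have ij: "i < c" "j < a" using assms by auto
  have "mat_adjoint (A * B) $$ (i,j) = conjugate ((A * B) $$ (j,i))"
    using assms ij by simp
  also have "\<dots> = (\<Sum>k<b. conjugate (A $$ (j,k)) * conjugate (B $$ (k,i)))"
    unfolding index_mult_mat_sum[OF assms ij(2) ij(1)] by (simp add: sum_conjugate conjugate_dist_mul)
  also have "\<dots> = (\<Sum>k<b. mat_adjoint B $$ (i,k) * mat_adjoint A $$ (k,j))"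
    using assms ij by (intro sum.cong) (auto simp: mult.commute)
  also have "\<dots> = (mat_adjoint B * mat_adjoint A) $$ (i,j)"
    by (rule index_mult_mat_sum[symmetric]) (use assms ij in auto)
  finally show "mat_adjoint (A * B) $$ (i,j) = (mat_adjoint B * mat_adjoint A) $$ (i,j)" .
qed (use assms in auto)

definition unitary :: "nat \<Rightarrow> complex mat \<Rightarrow> bool" where
  "unitary n U \<longleftrightarrow> U \<in> carrier_mat n n \<and> mat_adjoint U * U = 1\<^sub>m n"

lemma unitary_carrier: "unitary n U \<Longrightarrow> U \<in> carrier_mat n n"
  by (simp add: unitary_def)

lemma unitary_right_inverse: "unitary n U \<Longrightarrow> U * mat_adjoint U = 1\<^sub>m n"
  unfolding unitary_def using mat_mult_left_right_inverse[OF mat_adjoint_carrier] by blast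

lemma unitary_mult:
  assumes "unitary n U" "unitary n V"
  shows "unitary n (U * V)"
proof -
  have U: "U \<in> carrier_mat n n" and V: "V \<in> carrier_mat n n"
    using assms by (simp_all add: unitary_def)
  have "mat_adjoint (U * V) * (U * V) = mat_adjoint V * ((mat_adjoint U * U) * V)"
    using U V by (simp add: mat_adjoint_mult[OF U V] assoc_mult_mat[of _ n n _ n _ n])
  also have "\<dots> = 1\<^sub>m n" using assms V by (simp add: unitary_def)
  finally show ?thesis using U V by (simp add: unitary_def)
qed

lemma unitary_columns_orthonormal:
  assumes "unitary n U" "i < n" "k < n"
  shows "(\<Sum>j<n. cnj (U $$ (j,i)) * U $$ (j,k)) = (if i = k then 1 else 0)"
proof -
  have U: "U \<in> carrier_mat n n" using assms(1) by (rule unitary_carrier)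
  have "(\<Sum>j<n. cnj (U $$ (j,i)) * U $$ (j,k)) = (mat_adjoint U * U) $$ (i,k)"
    using U assms by (subst index_mult_mat_sum[of _ n n]) auto
  then show ?thesis using assms by (simp add: unitary_def)
qed

definition corner_block :: "'a::zero \<Rightarrow> 'a mat \<Rightarrow> 'a mat" where
  "corner_block a B = four_block_mat (mat 1 1 (\<lambda>_. a)) (0\<^sub>m 1 (dim_col B)) (0\<^sub>m (dim_row B) 1) B"

lemma corner_block_dim [simp]:
  "dim_row (corner_block a B) = Suc (dim_row B)" "dim_col (corner_block a B) = Suc (dim_col B)"
  by (simp_all add: corner_block_def)

lemma corner_block_carrier [simp]:
  "B \<in> carrier_mat m k \<Longrightarrow> corner_block a B \<in> carrier_mat (Suc m) (Suc k)"
  unfolding corner_block_def carrier_mat_def by simp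

lemma corner_block_index:
  assumes "i < Suc (dim_row B)" "j < Suc (dim_col B)"
  shows "corner_block a B $$ (i,j) =
    (if i = 0 \<and> j = 0 then a else if i = 0 \<or> j = 0 then 0 else B $$ (i - 1, j - 1))"
  using assms by (auto simp: corner_block_def)

lemma corner_block_mult:
  fixes a b :: "'a::semiring_0"
  assumes "B \<in> carrier_mat m k" "C \<in> carrier_mat k l"
  shows "corner_block a B * corner_block b C = corner_block (a * b) (B * C)"
proof -
  have "mat 1 1 (\<lambda>_. a) * mat 1 1 (\<lambda>_. b) = mat 1 1 (\<lambda>_. a * b)"
    by (rule eq_matI) (auto simp: scalar_prod_def)
  then show ?thesis
    using assms unfolding corner_block_def
    by (subst mult_four_block_mat[of _ 1 1 _ k _ m _ _ 1 _ l]) auto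
qed

lemma mat_adjoint_corner_block:
  "mat_adjoint (corner_block a B) = corner_block (conjugate a) (mat_adjoint B)"
  by (rule eq_matI) (auto simp: corner_block_index corner_block_def)

lemma mat_diag_Suc: "mat_diag (Suc m) f = corner_block (f 0) (mat_diag m (\<lambda>i. f (Suc i)))"
  by (rule eq_matI) (auto simp: mat_diag_def corner_block_index corner_block_def)

lemma corner_block_one: "corner_block 1 (1\<^sub>m m) = 1\<^sub>m (Suc m)"
  by (rule eq_matI) (auto simp: corner_block_index corner_block_def)

lemma unitary_corner_block:
  assumes "unitary m U"
  shows "unitary (Suc m) (corner_block 1 U)"
proof -
  have U: "U \<in> carrier_mat m m" using assms by (rule unitary_carrier)
  have "mat_adjoint (corner_block 1 U) * corner_block 1 U = corner_block 1 (mat_adjoint U * U)"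
    unfolding mat_adjoint_corner_block using U by (simp add: corner_block_mult[of _ m m _ m])
  then show ?thesis using assms U by (simp add: unitary_def corner_block_one)
qed

lemma orthogonal_basis_starting_with:
  fixes v :: "complex vec"
  assumes v: "v \<in> carrier_vec n" and v0: "v \<noteq> 0\<^sub>v n"
  obtains ws where "set ws \<subseteq> carrier_vec n" "corthogonal ws" "length ws = n" "ws ! 0 = v"
proof -
  interpret cof_vec_space n "TYPE(complex)" .
  define b where "b = basis_completion v"
  from basis_completion[OF v v0, folded b_def] have
    b: "set b \<subseteq> carrier_vec n" "distinct b" "\<not> lin_dep (set b)" "length b = n" "hd b = v"
    by auto
  have "n \<noteq> 0" using v v0 by (auto intro: eq_vecI)
  then obtain vs where bv: "b = v # vs" using b(4,5) by (cases b) auto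
  note gs = gram_schmidt_result[OF b(1-3) refl]
  have "gram_schmidt n b ! 0 = v"
    using gram_schmidt_hd[OF v, of vs] gs(4) b(4) \<open>n \<noteq> 0\<close>
    by (metis bv hd_conv_nth list.size(3))
  with gs b(4) show ?thesis by (intro that[of "gram_schmidt n b"]) auto
qed

lemma scalar_prodc_self:
  fixes w :: "complex vec"
  assumes "w \<in> carrier_vec n"
  shows "w \<bullet>c w = complex_of_real (\<Sum>j<n. (cmod (w $ j))\<^sup>2)"
  using assms unfolding scalar_prod_def of_real_sum
  by (auto simp: lessThan_atLeast0 complex_norm_square simp del: of_real_power intro!: sum.cong)

lemma unitary_normalized_columns:
  fixes ws :: "complex vec list"
  assumes ws: "set ws \<subseteq> carrier_vec n" "corthogonal ws" "length ws = n"
  defines "N \<equiv> \<lambda>i. sqrt (\<Sum>j<n. (cmod ((ws ! i) $ j))\<^sup>2)"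
  shows "unitary n (mat n n (\<lambda>(j,i). (ws ! i) $ j / complex_of_real (N i)))"
proof -
  let ?W = "mat n n (\<lambda>(j,i). (ws ! i) $ j / complex_of_real (N i))"
  have wsc: "ws ! i \<in> carrier_vec n" if "i < n" for i using ws that by auto
  have N2: "complex_of_real (N i) * complex_of_real (N i) = ws ! i \<bullet>c ws ! i" if "i < n" for i
    unfolding scalar_prodc_self[OF wsc[OF that]] N_def
    by (simp flip: of_real_mult add: sum_nonneg)
  have "(mat_adjoint ?W * ?W) $$ (i,k) = 1\<^sub>m n $$ (i,k)" if ik: "i < n" "k < n" for i k
  proof -
    have "(mat_adjoint ?W * ?W) $$ (i,k) = ws ! k \<bullet>c ws ! i / (complex_of_real (N i) * complex_of_real (N k))"
      using ik wsc[OF ik(1)] wsc[OF ik(2)]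
      by (subst index_mult_mat_sum[of _ n n])
        (auto simp: scalar_prod_def lessThan_atLeast0 sum_divide_distrib mult.commute intro!: sum.cong)
    moreover have "ws ! i \<bullet>c ws ! i \<noteq> 0" using corthogonalD[OF ws(2)] ws(3) ik by auto
    ultimately show ?thesis
      using corthogonalD[OF ws(2), of k i] ws(3) ik N2[OF ik(1)] by auto
  qed
  then show ?thesis unfolding unitary_def by (auto intro!: eq_matI)
qed

lemma unitary_with_first_column:
  fixes v :: "complex vec"
  assumes "v \<in> carrier_vec n" "v \<noteq> 0\<^sub>v n"
  obtains W \<alpha> where "unitary n W" "\<And>j. j < n \<Longrightarrow> W $$ (j,0) = \<alpha> * v $ j"
proof -
  obtain ws where ws: "set ws \<subseteq> carrier_vec n" "corthogonal ws" "length ws = n" "ws ! 0 = v"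
    using orthogonal_basis_starting_with[OF assms] by blast
  from unitary_normalized_columns[OF ws(1-3)] show ?thesis
    by (rule that[where \<alpha> = "1 / complex_of_real (sqrt (\<Sum>j<n. (cmod (v $ j))\<^sup>2))"])
      (use ws(4) in auto)
qed

definition hermitian :: "'a::conjugatable_field mat \<Rightarrow> bool" where
  "hermitian A \<longleftrightarrow> mat_adjoint A = A"

lemma hermitian_index: "hermitian A \<Longrightarrow> i < dim_row A \<Longrightarrow> j < dim_col A \<Longrightarrow>
    A $$ (j,i) = conjugate (A $$ (i,j))"
  unfolding hermitian_def by (metis mat_adjoint_index(1) mat_adjoint_index(2,3))

lemma hermitian_adjoint_sandwich:
  assumes "hermitian A" "A \<in> carrier_mat n n" "W \<in> carrier_mat n n"
  shows "hermitian (mat_adjoint W * A * W)"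
  using assms unfolding hermitian_def
  by (simp add: mat_adjoint_mult[of _ n n _ n] assoc_mult_mat[of _ n n _ n _ n])

lemma unitary_eigenvector_first_column:
  fixes A :: "complex mat"
  assumes A: "A \<in> carrier_mat n n" and W: "unitary n W" and i: "i < n"
    and v: "v \<in> carrier_vec n" "A *\<^sub>v v = \<mu> \<cdot>\<^sub>v v"
    and W0: "\<And>j. j < n \<Longrightarrow> W $$ (j,0) = \<alpha> * v $ j"
  shows "(mat_adjoint W * A * W) $$ (i,0) = (if i = 0 then \<mu> else 0)"
proof -
  have WC: "W \<in> carrier_mat n n" using W by (rule unitary_carrier)
  have n: "0 < n" using i by simp
  have AW0: "(A * W) $$ (j,0) = \<mu> * W $$ (j,0)" if "j < n" for j
  proof -
    have "(A * W) $$ (j,0) = (\<Sum>l<n. A $$ (j,l) * (\<alpha> * v $ l))"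
      unfolding index_mult_mat_sum[OF A WC that n] using W0 by simp
    also have "\<dots> = \<alpha> * (A *\<^sub>v v) $ j"
      using that A v(1) by (simp add: scalar_prod_def lessThan_atLeast0 sum_distrib_left mult_ac)
    finally show ?thesis using v that W0 by simp
  qed
  have "mat_adjoint W * A * W = mat_adjoint W * (A * W)"
    by (rule assoc_mult_mat[OF mat_adjoint_carrier[OF WC] A WC])
  then have "(mat_adjoint W * A * W) $$ (i,0) = (\<Sum>j<n. cnj (W $$ (j,i)) * (A * W) $$ (j,0))"
    using i WC by (simp add: index_mult_mat_sum[OF mat_adjoint_carrier[OF WC] mult_carrier_mat[OF A WC] i n])
  also have "\<dots> = \<mu> * (\<Sum>j<n. cnj (W $$ (j,i)) * W $$ (j,0))"
    unfolding sum_distrib_left by (intro sum.cong refl) (simp add: AW0)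
  finally show ?thesis using unitary_columns_orthonormal[OF W i n] by simp
qed

lemma hermitian_corner_block:
  fixes A :: "complex mat"
  assumes A: "A \<in> carrier_mat (Suc m) (Suc m)" "hermitian A"
    and col0: "\<And>i. i < Suc m \<Longrightarrow> A $$ (i,0) = (if i = 0 then \<mu> else 0)"
  obtains e B where "B \<in> carrier_mat m m" "hermitian B" "A = corner_block (complex_of_real e) B"
proof -
  have row0: "A $$ (0,j) = (if j = 0 then \<mu> else 0)" if "j < Suc m" for j
    using hermitian_index[OF A(2), of j 0] col0 that A(1) by auto
  have real: "complex_of_real (Re \<mu>) = \<mu>"
    using row0[of 0] hermitian_index[OF A(2), of 0 0] col0[of 0] A(1) by (auto simp: complex_eq_iff)
  define B where "B = mat m m (\<lambda>(i,j). A $$ (Suc i, Suc j))"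
  have "A = corner_block (complex_of_real (Re \<mu>)) B"
  proof (rule eq_matI)
    fix i j assume "i < dim_row (corner_block (complex_of_real (Re \<mu>)) B)"
      "j < dim_col (corner_block (complex_of_real (Re \<mu>)) B)"
    then show "A $$ (i,j) = corner_block (complex_of_real (Re \<mu>)) B $$ (i,j)"
      using col0 row0 real by (cases i; cases j) (auto simp: B_def corner_block_index)
  qed (use A(1) in \<open>auto simp: B_def\<close>)
  moreover have "hermitian B"
    unfolding hermitian_def
  proof (rule eq_matI)
    fix i j assume "i < dim_row B" "j < dim_col B"
    then show "mat_adjoint B $$ (i,j) = B $$ (i,j)"
      using hermitian_index[OF A(2), of "Suc j" "Suc i"] A(1) by (simp add: B_def)
  qed (simp_all add: B_def)
  ultimately show ?thesis by (intro that[of B "Re \<mu>"]) (auto simp: B_def)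
qed

lemma hermitian_deflation:
  fixes A :: "complex mat"
  assumes A: "A \<in> carrier_mat (Suc m) (Suc m)" and herm: "hermitian A"
  obtains W e B where "unitary (Suc m) W" "B \<in> carrier_mat m m" "hermitian B"
    "mat_adjoint W * A * W = corner_block (complex_of_real e) B"
proof -
  obtain \<mu> where "eigenvalue A \<mu>"
    using spectrum_non_empty[OF A] unfolding spectrum_def by auto
  then obtain v where "eigenvector A v \<mu>" unfolding eigenvalue_def by auto
  then have v: "v \<in> carrier_vec (Suc m)" "v \<noteq> 0\<^sub>v (Suc m)" "A *\<^sub>v v = \<mu> \<cdot>\<^sub>v v"
    using A unfolding eigenvector_def by auto
  obtain W \<alpha> where W: "unitary (Suc m) W"
    and W0: "\<And>j. j < Suc m \<Longrightarrow> W $$ (j,0) = \<alpha> * v $ j"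
    using unitary_with_first_column[OF v(1,2)] by blast
  have WC: "W \<in> carrier_mat (Suc m) (Suc m)" using W by (rule unitary_carrier)
  have "mat_adjoint W * A * W \<in> carrier_mat (Suc m) (Suc m)" using WC A by auto
  moreover have "hermitian (mat_adjoint W * A * W)"
    by (rule hermitian_adjoint_sandwich[OF herm A WC])
  ultimately obtain e B where "B \<in> carrier_mat m m" "hermitian B"
    "mat_adjoint W * A * W = corner_block (complex_of_real e) B"
    using hermitian_corner_block unitary_eigenvector_first_column[OF A W _ v(1,3) W0] by metis
  with W show ?thesis by (rule that)
qed

lemma mult_carrier_square: "A \<in> carrier_mat n n \<Longrightarrow> B \<in> carrier_mat n n \<Longrightarrow> A * B \<in> carrier_mat n n"
  by (rule mult_carrier_mat)

lemma unitary_conjugate_back: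
  assumes W: "unitary n W" and A: "A \<in> carrier_mat n n"
  shows "W * (mat_adjoint W * A * W) * mat_adjoint W = A"
proof -
  have WC: "W \<in> carrier_mat n n" and W'C: "mat_adjoint W \<in> carrier_mat n n"
    using W by (simp_all add: unitary_carrier)
  have "W * (mat_adjoint W * A * W) * mat_adjoint W = (W * mat_adjoint W) * A * (W * mat_adjoint W)"
    using WC W'C A by (simp add: mult_carrier_square assoc_mult_mat[of _ n n _ n _ n])
  then show ?thesis using unitary_right_inverse[OF W] A by simp
qed

theorem hermitian_unitary_diagonalization:
  fixes A :: "complex mat"
  assumes "A \<in> carrier_mat n n" "hermitian A"
  obtains U d where "unitary n U" "A = U * mat_diag n (\<lambda>i. complex_of_real (d i)) * mat_adjoint U"
  using assms
proof (induction n arbitrary: A thesis)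
  case 0
  have "unitary 0 (1\<^sub>m 0)" by (auto simp: unitary_def intro!: eq_matI)
  moreover have "A = 1\<^sub>m 0 * mat_diag 0 (\<lambda>_. complex_of_real 0) * mat_adjoint (1\<^sub>m 0)"
    using 0 by (auto intro!: eq_matI)
  ultimately show ?case by (rule 0(1))
next
  case (Suc m)
  obtain W e B where W: "unitary (Suc m) W" and B: "B \<in> carrier_mat m m" "hermitian B"
    and deflate: "mat_adjoint W * A * W = corner_block (complex_of_real e) B"
    using hermitian_deflation[OF Suc.prems(2,3)] by blast
  obtain V d where V: "unitary m V"
    and B_diag: "B = V * mat_diag m (\<lambda>i. complex_of_real (d i)) * mat_adjoint V"
    using Suc.IH[OF _ B] by blast
  define U where "U = W * corner_block 1 V"
  define d' where "d' = (\<lambda>i. if i = 0 then e else d (i - 1))"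
  have WC: "W \<in> carrier_mat (Suc m) (Suc m)" and VC: "V \<in> carrier_mat m m"
    using W V by (simp_all add: unitary_carrier)
  have "unitary (Suc m) U"
    unfolding U_def by (rule unitary_mult[OF W unitary_corner_block[OF V]])
  moreover have "A = U * mat_diag (Suc m) (\<lambda>i. complex_of_real (d' i)) * mat_adjoint U"
  proof -
    have "A = W * (mat_adjoint W * A * W) * mat_adjoint W"
      using unitary_conjugate_back[OF W Suc.prems(2)] ..
    also have "mat_adjoint W * A * W = corner_block 1 V * mat_diag (Suc m) (\<lambda>i. complex_of_real (d' i)) * mat_adjoint (corner_block 1 V)"
      unfolding deflate B_diag mat_diag_Suc mat_adjoint_corner_block
      using VC by (simp add: corner_block_mult[of _ m m _ m] d'_def)
    finally show ?thesis
      using WC VC by (simp add: U_def mat_adjoint_mult[of _ "Suc m" "Suc m" _ "Suc m"]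
          mult_carrier_square assoc_mult_mat[of _ "Suc m" "Suc m" _ "Suc m" _ "Suc m"])
  qed
  ultimately show ?case by (rule Suc.prems(1))
qed

lemma order_linear_factor: "order x [:-a, 1:] = (if a = x then 1 else 0)"
  using order_power_n_n[of a 1] by (auto intro: order_0I)

lemma order_prod_linear_factors:
  "order x (\<Prod>i\<leftarrow>[0..<n]. [:- a i, 1:]) = card {i. i < n \<and> a i = x}"
proof -
  have "order x (\<Prod>i\<leftarrow>[0..<n]. [:- a i, 1:]) = (\<Sum>i\<leftarrow>[0..<n]. if a i = x then 1 else 0)"
    by (subst order_prod_list) (auto simp: order_linear_factor comp_def)
  also have "\<dots> = (\<Sum>i\<in>{..<n}. if a i = x then 1 else 0)"
    by (simp add: interv_sum_list_conv_sum_set_nat atLeast0LessThan)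
  also have "\<dots> = card {i \<in> {..<n}. a i = x}"
    using sum.inter_filter[of "{..<n}" "\<lambda>_. 1::nat" "\<lambda>i. a i = x"] by simp
  finally show ?thesis by simp
qed

lemma char_poly_mat_diag: "char_poly (mat_diag n f) = (\<Prod>i\<leftarrow>[0..<n]. [:- f i, 1:])"
proof -
  have "upper_triangular (mat_diag n f)" by (simp add: upper_triangular_def mat_diag_def)
  moreover have "diag_mat (mat_diag n f) = map f [0..<n]"
    by (simp add: diag_mat_def mat_diag_def)
  ultimately show ?thesis
    by (simp add: char_poly_upper_triangular[OF mat_diag_dim] comp_def)
qed

lemma sq_minus_unitary_diag:
  assumes U: "unitary n U" and A: "A = U * mat_diag n (\<lambda>i. complex_of_real (d i)) * mat_adjoint U"
  shows "sq_minus A = card {i. i < n \<and> d i < 0}"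
proof -
  have UC: "U \<in> carrier_mat n n" using U by (rule unitary_carrier)
  have "similar_mat A (mat_diag n (\<lambda>i. complex_of_real (d i)))"
    using UC U A unitary_right_inverse[OF U]
    by (intro similar_matI[of _ _ U "mat_adjoint U" n]) (auto simp: unitary_def)
  then have cp: "char_poly A = (\<Prod>i\<leftarrow>[0..<n]. [:- complex_of_real (d i), 1:])"
    by (simp add: char_poly_similar char_poly_mat_diag)
  define R where "R = {r::real. r < 0 \<and> poly (char_poly A) (complex_of_real r) = 0}"
  have R: "R = d ` {i. i < n \<and> d i < 0}"
    unfolding R_def cp poly_prod_list by (auto simp: prod_list_zero_iff)
  have "sq_minus A = (\<Sum>r\<in>R. card {i. i < n \<and> d i = r})"
    unfolding sq_minus_def R_def[symmetric] by (simp add: cp order_prod_linear_factors)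
  also have "\<dots> = (\<Sum>r\<in>R. card {i \<in> {i. i < n \<and> d i < 0}. d i = r})"
    by (intro sum.cong refl arg_cong[where f=card]) (auto simp: R)
  also have "\<dots> = card {i. i < n \<and> d i < 0}"
    unfolding R using sum.image_gen[of "{i. i < n \<and> d i < 0}" "\<lambda>_. 1::nat" d] by simp
  finally show ?thesis .
qed

section \<open>Negative subspaces of kernel forms\<close>

definition kernel_form :: "('a \<Rightarrow> 'a \<Rightarrow> complex) \<Rightarrow> 'a set \<Rightarrow> ('a \<Rightarrow> complex) \<Rightarrow> complex" where
  "kernel_form K S y = (\<Sum>z\<in>S. \<Sum>w\<in>S. cnj (y z) * K z w * y w)"

text \<open>A \<open>p\<close>-dimensional subspace on which the form is negative definite is encoded by \<open>p\<close>
  generators \<open>X k\<close>, \<open>k \<in> I\<close>, all of whose nontrivial combinations have negative form; this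
  also makes them linearly independent.\<close>
definition has_negative_subspace :: "('a \<Rightarrow> 'a \<Rightarrow> complex) \<Rightarrow> 'a set \<Rightarrow> nat \<Rightarrow> bool" where
  "has_negative_subspace K S p \<longleftrightarrow> (\<exists>(I::nat set) (X::nat \<Rightarrow> 'a \<Rightarrow> complex).
     finite I \<and> card I = p \<and>
     (\<forall>c. (\<exists>k\<in>I. c k \<noteq> 0) \<longrightarrow> Re (kernel_form K S (\<lambda>z. \<Sum>k\<in>I. c k * X k z)) < 0))"

lemma has_negative_subspaceI:
  fixes I :: "nat set" and X :: "nat \<Rightarrow> 'a \<Rightarrow> complex"
  assumes "finite I" "card I = p"
    "\<And>c. \<exists>k\<in>I. c k \<noteq> 0 \<Longrightarrow> Re (kernel_form K S (\<lambda>z. \<Sum>k\<in>I. c k * X k z)) < 0"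
  shows "has_negative_subspace K S p"
  unfolding has_negative_subspace_def using assms by blast

lemma has_negative_subspaceE:
  assumes "has_negative_subspace K S p"
  obtains I :: "nat set" and X :: "nat \<Rightarrow> 'a \<Rightarrow> complex" where "finite I" "card I = p"
    "\<And>c. \<exists>k\<in>I. c k \<noteq> 0 \<Longrightarrow> Re (kernel_form K S (\<lambda>z. \<Sum>k\<in>I. c k * X k z)) < 0"
  using assms unfolding has_negative_subspace_def by blast

lemma kernel_form_cong:
  "(\<And>z w. z \<in> S \<Longrightarrow> w \<in> S \<Longrightarrow> K z w = K' z w) \<Longrightarrow> (\<And>z. z \<in> S \<Longrightarrow> y z = y' z) \<Longrightarrow>
    kernel_form K S y = kernel_form K' S y'"
  unfolding kernel_form_def by (intro sum.cong refl) auto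

lemma kernel_form_vanishing_outside:
  assumes "finite S" "T \<subseteq> S" "\<And>z. z \<in> S - T \<Longrightarrow> y z = 0"
  shows "kernel_form K S y = kernel_form K T y"
proof -
  have "kernel_form K S y = (\<Sum>z\<in>S. \<Sum>w\<in>T. cnj (y z) * K z w * y w)"
    unfolding kernel_form_def using assms by (intro sum.cong refl sum.mono_neutral_right) auto
  also have "\<dots> = kernel_form K T y"
    unfolding kernel_form_def using assms by (intro sum.mono_neutral_right) auto
  finally show ?thesis .
qed

lemma has_negative_subspace_kernel_cong:
  assumes "\<And>z w. z \<in> S \<Longrightarrow> w \<in> S \<Longrightarrow> K z w = K' z w"
  shows "has_negative_subspace K S p \<longleftrightarrow> has_negative_subspace K' S p"
proof -
  have "kernel_form K S y = kernel_form K' S y" for y by (rule kernel_form_cong[OF assms refl])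
  then show ?thesis unfolding has_negative_subspace_def by simp
qed

lemma has_negative_subspace_le:
  assumes "has_negative_subspace K S p" "q \<le> p"
  shows "has_negative_subspace K S q"
proof -
  obtain I :: "nat set" and X where I: "finite I" "card I = p"
    and neg: "\<And>c. \<exists>k\<in>I. c k \<noteq> 0 \<Longrightarrow> Re (kernel_form K S (\<lambda>z. \<Sum>k\<in>I. c k * X k z)) < 0"
    using assms(1) by (rule has_negative_subspaceE) blast
  obtain J where J: "J \<subseteq> I" "card J = q"
    using obtain_subset_with_card_n[of q I] assms(2) I by auto
  show ?thesis
  proof (rule has_negative_subspaceI[where I = J and X = X])
    fix c :: "nat \<Rightarrow> complex" assume c: "\<exists>k\<in>J. c k \<noteq> 0"
    let ?c = "\<lambda>k. if k \<in> J then c k else 0"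
    have "(\<Sum>k\<in>I. ?c k * X k z) = (\<Sum>k\<in>J. c k * X k z)" for z
      using I J by (intro sum.mono_neutral_cong_right) auto
    moreover have "\<exists>k\<in>I. ?c k \<noteq> 0" using c J by auto
    ultimately show "Re (kernel_form K S (\<lambda>z. \<Sum>k\<in>J. c k * X k z)) < 0"
      using neg[of ?c] by simp
  qed (use I J finite_subset in auto)
qed

lemma has_negative_subspace_mono:
  assumes "has_negative_subspace K T p" "finite S" "T \<subseteq> S"
  shows "has_negative_subspace K S p"
proof -
  obtain I :: "nat set" and X where I: "finite I" "card I = p"
    and neg: "\<And>c. \<exists>k\<in>I. c k \<noteq> 0 \<Longrightarrow> Re (kernel_form K T (\<lambda>z. \<Sum>k\<in>I. c k * X k z)) < 0"
    using assms(1) by (rule has_negative_subspaceE) blast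
  let ?X = "\<lambda>k z. if z \<in> T then X k z else 0"
  show ?thesis
  proof (rule has_negative_subspaceI[OF I, where X = ?X])
    fix c :: "nat \<Rightarrow> complex" assume "\<exists>k\<in>I. c k \<noteq> 0"
    moreover have "kernel_form K S (\<lambda>z. \<Sum>k\<in>I. c k * ?X k z) = kernel_form K T (\<lambda>z. \<Sum>k\<in>I. c k * X k z)"
      using assms(2,3) by (subst kernel_form_vanishing_outside[of S T]) (auto intro: kernel_form_cong)
    ultimately show "Re (kernel_form K S (\<lambda>z. \<Sum>k\<in>I. c k * ?X k z)) < 0" using neg by simp
  qed
qed

lemma has_negative_subspace_remove_point:
  assumes "has_negative_subspace K S p" "finite S"
  shows "has_negative_subspace K (S - {z0}) (p - 1)"
proof -
  obtain I :: "nat set" and X where I: "finite I" "card I = p"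
    and neg: "\<And>c. \<exists>k\<in>I. c k \<noteq> 0 \<Longrightarrow> Re (kernel_form K S (\<lambda>z. \<Sum>k\<in>I. c k * X k z)) < 0"
    using assms(1) by (rule has_negative_subspaceE) blast
  have restrict: "kernel_form K S y = kernel_form K (S - {z0}) y" if "y z0 = 0" for y
    using assms(2) that by (intro kernel_form_vanishing_outside) auto
  show ?thesis
  proof (cases "\<forall>k\<in>I. X k z0 = 0")
    case True
    have "has_negative_subspace K (S - {z0}) p"
      by (rule has_negative_subspaceI[OF I, where X = X]) (use True neg restrict in auto)
    then show ?thesis by (rule has_negative_subspace_le) simp
  next
    case False
    then obtain k0 where k0: "k0 \<in> I" "X k0 z0 \<noteq> 0" by blast
    \<comment> \<open>Subtracting multiples of \<open>X k0\<close> makes the other generators vanish at \<open>z0\<close>; their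
      nontrivial combinations are still nontrivial combinations of the original ones.\<close>
    define X' where "X' = (\<lambda>k z. X k z - X k z0 / X k0 z0 * X k0 z)"
    show ?thesis
    proof (rule has_negative_subspaceI[where I = "I - {k0}" and X = X'])
      fix c' :: "nat \<Rightarrow> complex" assume c': "\<exists>k\<in>I - {k0}. c' k \<noteq> 0"
      define c where "c = c'(k0 := - (\<Sum>k\<in>I - {k0}. c' k * X k z0) / X k0 z0)"
      have comb: "(\<Sum>k\<in>I - {k0}. c' k * X' k z) = (\<Sum>k\<in>I. c k * X k z)" for z
      proof -
        have "(\<Sum>k\<in>I. c k * X k z) = c k0 * X k0 z + (\<Sum>k\<in>I - {k0}. c' k * X k z)"
          using I(1) k0(1) by (simp add: sum.remove c_def)
        then show ?thesis
          by (simp add: X'_def c_def algebra_simps sum_subtractf sum_distrib_left sum_divide_distrib)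
      qed
      have "(\<Sum>k\<in>I - {k0}. c' k * X' k z0) = 0" using k0(2) by (simp add: X'_def)
      then have "kernel_form K (S - {z0}) (\<lambda>z. \<Sum>k\<in>I - {k0}. c' k * X' k z)
          = kernel_form K S (\<lambda>z. \<Sum>k\<in>I. c k * X k z)"
        by (simp add: restrict comb)
      moreover have "\<exists>k\<in>I. c k \<noteq> 0" using c' by (auto simp: c_def)
      ultimately show "Re (kernel_form K (S - {z0}) (\<lambda>z. \<Sum>k\<in>I - {k0}. c' k * X' k z)) < 0"
        using neg by simp
    qed (use I k0 in auto)
  qed
qed

lemma has_negative_subspace_restrict:
  assumes "has_negative_subspace K S p" "finite S" "T \<subseteq> S"
  shows "has_negative_subspace K T (p - card (S - T))"
  using assms
proof (induction "card (S - T)" arbitrary: S p)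
  case 0
  then have "S = T" by auto
  with 0 show ?case by simp
next
  case (Suc m)
  then have "S - T \<noteq> {}" by (metis card.empty nat.distinct(1))
  then obtain z0 where z0: "z0 \<in> S - T" by blast
  have "has_negative_subspace K (S - {z0}) (p - 1)"
    using has_negative_subspace_remove_point[OF Suc.prems(1,2)] .
  moreover have "S - {z0} - T = (S - T) - {z0}" by blast
  then have "m = card (S - {z0} - T)"
    using Suc.hyps(2) z0 Suc.prems(2) by (simp add: card_Diff_singleton)
  ultimately have "has_negative_subspace K T (p - 1 - m)"
    using Suc.hyps(1) Suc.prems(2,3) z0 by blast
  then show ?case by (simp flip: Suc.hyps(2))
qed

lemma kernel_form_reindex:
  "inj_on f A \<Longrightarrow> kernel_form K (f ` A) y = kernel_form (\<lambda>a b. K (f a) (f b)) A (\<lambda>a. y (f a))"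
  unfolding kernel_form_def by (simp add: sum.reindex)

lemma has_negative_subspace_reindex:
  assumes f: "inj_on f A"
  shows "has_negative_subspace K (f ` A) p \<longleftrightarrow> has_negative_subspace (\<lambda>a b. K (f a) (f b)) A p"
proof
  assume "has_negative_subspace K (f ` A) p"
  then obtain I :: "nat set" and X where I: "finite I" "card I = p"
    and neg: "\<And>c. \<exists>k\<in>I. c k \<noteq> 0 \<Longrightarrow> Re (kernel_form K (f ` A) (\<lambda>z. \<Sum>k\<in>I. c k * X k z)) < 0"
    by (rule has_negative_subspaceE) blast
  show "has_negative_subspace (\<lambda>a b. K (f a) (f b)) A p"
  proof (rule has_negative_subspaceI[OF I, where X = "\<lambda>k a. X k (f a)"])
    fix c :: "nat \<Rightarrow> complex" assume "\<exists>k\<in>I. c k \<noteq> 0"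
    then have "Re (kernel_form K (f ` A) (\<lambda>z. \<Sum>k\<in>I. c k * X k z)) < 0" by (rule neg)
    then show "Re (kernel_form (\<lambda>a b. K (f a) (f b)) A (\<lambda>a. \<Sum>k\<in>I. c k * X k (f a))) < 0"
      unfolding kernel_form_reindex[OF f] .
  qed
next
  assume "has_negative_subspace (\<lambda>a b. K (f a) (f b)) A p"
  then obtain I :: "nat set" and X where I: "finite I" "card I = p"
    and neg: "\<And>c. \<exists>k\<in>I. c k \<noteq> 0 \<Longrightarrow>
      Re (kernel_form (\<lambda>a b. K (f a) (f b)) A (\<lambda>a. \<Sum>k\<in>I. c k * X k a)) < 0"
    by (rule has_negative_subspaceE) blast
  show "has_negative_subspace K (f ` A) p"
  proof (rule has_negative_subspaceI[OF I, where X = "\<lambda>k z. X k (inv_into A f z)"])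
    fix c :: "nat \<Rightarrow> complex" assume "\<exists>k\<in>I. c k \<noteq> 0"
    moreover have "kernel_form K (f ` A) (\<lambda>z. \<Sum>k\<in>I. c k * X k (inv_into A f z))
        = kernel_form (\<lambda>a b. K (f a) (f b)) A (\<lambda>a. \<Sum>k\<in>I. c k * X k a)"
      unfolding kernel_form_reindex[OF f] using f by (intro kernel_form_cong) auto
    ultimately show "Re (kernel_form K (f ` A) (\<lambda>z. \<Sum>k\<in>I. c k * X k (inv_into A f z))) < 0"
      using neg by simp
  qed
qed

lemma Re_kernel_form_unitary_diag:
  assumes U: "U \<in> carrier_mat n n"
    and A: "A = U * mat_diag n (\<lambda>i. complex_of_real (d i)) * mat_adjoint U"
  shows "Re (kernel_form (\<lambda>i j. A $$ (i,j)) {..<n} y)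
    = (\<Sum>k<n. d k * (cmod (\<Sum>j<n. cnj (U $$ (j,k)) * y j))\<^sup>2)"
proof -
  let ?u = "\<lambda>k. \<Sum>j<n. cnj (U $$ (j,k)) * y j"
  have entry: "A $$ (i,j) = (\<Sum>k<n. U $$ (i,k) * complex_of_real (d k) * cnj (U $$ (j,k)))"
    if "i < n" "j < n" for i j
    unfolding A mat_diag_mult_right[OF U]
    using that U by (subst index_mult_mat_sum[of _ n n]) auto
  have "kernel_form (\<lambda>i j. A $$ (i,j)) {..<n} y
      = (\<Sum>i<n. \<Sum>j<n. \<Sum>k<n. cnj (y i) * U $$ (i,k) * complex_of_real (d k) * cnj (U $$ (j,k)) * y j)"
    unfolding kernel_form_def
    by (intro sum.cong refl) (simp add: entry sum_distrib_left sum_distrib_right mult_ac)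
  also have "\<dots> = (\<Sum>k<n. \<Sum>i<n. \<Sum>j<n. cnj (y i) * U $$ (i,k) * complex_of_real (d k) * cnj (U $$ (j,k)) * y j)"
    by (subst sum.swap) (intro sum.cong refl sum.swap)
  also have "\<dots> = (\<Sum>k<n. complex_of_real (d k) * cnj (?u k) * ?u k)"
  proof (rule sum.cong[OF refl])
    fix k
    have "cnj (?u k) = (\<Sum>i<n. cnj (y i) * U $$ (i,k))" by (simp add: mult.commute)
    then have "cnj (?u k) * ?u k = (\<Sum>i<n. \<Sum>j<n. cnj (y i) * U $$ (i,k) * (cnj (U $$ (j,k)) * y j))"
      by (simp only: sum_product)
    then have "complex_of_real (d k) * cnj (?u k) * ?u k = complex_of_real (d k) *
        (\<Sum>i<n. \<Sum>j<n. cnj (y i) * U $$ (i,k) * (cnj (U $$ (j,k)) * y j))"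
      by (simp only: mult.assoc[of "complex_of_real (d k)"])
    also have "\<dots> = (\<Sum>i<n. \<Sum>j<n.
        complex_of_real (d k) * (cnj (y i) * U $$ (i,k) * (cnj (U $$ (j,k)) * y j)))"
      by (simp only: sum_distrib_left)
    finally have "complex_of_real (d k) * cnj (?u k) * ?u k = \<dots>" .
    then show "(\<Sum>i<n. \<Sum>j<n. cnj (y i) * U $$ (i,k) * complex_of_real (d k) * cnj (U $$ (j,k)) * y j)
        = complex_of_real (d k) * cnj (?u k) * ?u k"
      by (simp add: mult_ac)
  qed
  also have "\<dots> = complex_of_real (\<Sum>k<n. d k * (cmod (?u k))\<^sup>2)"
    unfolding of_real_sum of_real_mult complex_norm_square
    by (intro sum.cong refl) (simp only: mult.assoc mult.commute[of "cnj _"])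
  finally show ?thesis by simp
qed

section \<open>Negative subspaces of Hermitian matrices\<close>

lemma homogeneous_system_nontrivial_solution:
  fixes M :: "'i \<Rightarrow> 'r \<Rightarrow> 'a::field"
  assumes "finite R" "finite I" "card R < card I"
  shows "\<exists>c. (\<exists>k\<in>I. c k \<noteq> 0) \<and> (\<forall>r\<in>R. (\<Sum>k\<in>I. c k * M k r) = 0)"
  using assms
proof (induction R arbitrary: I M rule: finite_induct)
  case empty
  then show ?case by (intro exI[of _ "\<lambda>_. 1"]) (auto simp: card_gt_0_iff)
next
  case (insert r0 R)
  show ?case
  proof (cases "\<forall>k\<in>I. M k r0 = 0")
    case True
    from insert have "card R < card I" by simp
    with insert.IH[of I M] insert.prems(1) obtain c where
      "\<exists>k\<in>I. c k \<noteq> 0" "\<forall>r\<in>R. (\<Sum>k\<in>I. c k * M k r) = 0" by blast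
    with True show ?thesis by auto
  next
    case False
    then obtain k0 where k0: "k0 \<in> I" "M k0 r0 \<noteq> 0" by blast
    \<comment> \<open>Gaussian elimination: use the equation for \<open>r0\<close> to eliminate the unknown \<open>c k0\<close>.\<close>
    define M' where "M' = (\<lambda>k r. M k r - M k r0 / M k0 r0 * M k0 r)"
    have "card R < card (I - {k0})" using insert k0 by simp
    with insert.IH[of "I - {k0}" M'] insert.prems(1) obtain c' where
      c': "\<exists>k\<in>I - {k0}. c' k \<noteq> 0" "\<forall>r\<in>R. (\<Sum>k\<in>I - {k0}. c' k * M' k r) = 0" by auto
    define c where "c = c'(k0 := - (\<Sum>k\<in>I - {k0}. c' k * M k r0) / M k0 r0)"
    have split: "(\<Sum>k\<in>I. c k * M k r) = c k0 * M k0 r + (\<Sum>k\<in>I - {k0}. c' k * M k r)" for r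
      using insert.prems(1) k0(1) by (simp add: sum.remove c_def)
    have "(\<Sum>k\<in>I. c k * M k r) = 0" if "r \<in> insert r0 R" for r
    proof (cases "r = r0")
      case True
      then show ?thesis using split[of r0] k0(2) by (simp add: c_def)
    next
      case False
      with that c' have "(\<Sum>k\<in>I - {k0}. c' k * M' k r) = 0" by auto
      then show ?thesis using split[of r]
        by (simp add: M'_def c_def algebra_simps sum_subtractf sum_distrib_left
            sum_divide_distrib)
    qed
    moreover have "\<exists>k\<in>I. c k \<noteq> 0" using c' by (auto simp: c_def)
    ultimately show ?thesis by blast
  qed
qed

lemma sum_mult_linear_combination:
  fixes a :: "nat \<Rightarrow> 'a::comm_semiring_0"
  shows "(\<Sum>j<n. a j * (\<Sum>k\<in>I. c k * X k j)) = (\<Sum>k\<in>I. c k * (\<Sum>j<n. a j * X k j))"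
  unfolding sum_distrib_left by (subst sum.swap) (simp add: mult.left_commute)

lemma hermitian_has_negative_subspace:
  fixes A :: "complex mat"
  assumes "A \<in> carrier_mat n n" "hermitian A"
  shows "has_negative_subspace (\<lambda>i j. A $$ (i,j)) {..<n} (sq_minus A)"
proof -
  obtain U d where U: "unitary n U"
    and A: "A = U * mat_diag n (\<lambda>i. complex_of_real (d i)) * mat_adjoint U"
    using hermitian_unitary_diagonalization[OF assms] by blast
  define R where "R = {i. i < n \<and> d i < 0}"
  have R: "finite R" "R \<subseteq> {..<n}" by (auto simp: R_def)
  \<comment> \<open>The witnesses are the eigenvectors (columns of \<open>U\<close>) for the negative eigenvalues.\<close>
  show ?thesis
  proof (rule has_negative_subspaceI[OF R(1), where X = "\<lambda>k j. U $$ (j,k)"])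
    show "card R = sq_minus A" unfolding R_def by (rule sq_minus_unitary_diag[OF U A, symmetric])
  next
    fix c :: "nat \<Rightarrow> complex" assume "\<exists>k\<in>R. c k \<noteq> 0"
    then obtain k0 where k0: "k0 \<in> R" "c k0 \<noteq> 0" by blast
    have coord: "(\<Sum>j<n. cnj (U $$ (j,m)) * (\<Sum>k\<in>R. c k * U $$ (j,k))) = (if m \<in> R then c m else 0)"
      if "m < n" for m
    proof -
      have "(\<Sum>j<n. cnj (U $$ (j,m)) * (\<Sum>k\<in>R. c k * U $$ (j,k))) = (\<Sum>k\<in>R. if m = k then c k else 0)"
        unfolding sum_mult_linear_combination using R unitary_columns_orthonormal[OF U that]
        by (intro sum.cong refl) auto
      then show ?thesis using R(1) by (simp add: sum.delta)
    qed
    have "Re (kernel_form (\<lambda>i j. A $$ (i,j)) {..<n} (\<lambda>j. \<Sum>k\<in>R. c k * U $$ (j,k)))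
        = (\<Sum>m\<in>R. d m * (cmod (c m))\<^sup>2)"
    proof -
      have "Re (kernel_form (\<lambda>i j. A $$ (i,j)) {..<n} (\<lambda>j. \<Sum>k\<in>R. c k * U $$ (j,k)))
          = (\<Sum>m<n. if m \<in> R then d m * (cmod (c m))\<^sup>2 else 0)"
        unfolding Re_kernel_form_unitary_diag[OF unitary_carrier[OF U] A]
        by (intro sum.cong refl) (simp add: coord)
      also have "\<dots> = (\<Sum>m\<in>{..<n} \<inter> R. d m * (cmod (c m))\<^sup>2)"
        by (simp add: sum.inter_restrict)
      finally show ?thesis using R(2) by (simp add: Int_absorb1)
    qed
    also have "\<dots> = d k0 * (cmod (c k0))\<^sup>2 + (\<Sum>m\<in>R - {k0}. d m * (cmod (c m))\<^sup>2)"
      using R k0(1) by (simp add: sum.remove)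
    also have "\<dots> < 0"
    proof -
      have "d k0 * (cmod (c k0))\<^sup>2 < 0" using k0 by (simp add: R_def mult_neg_pos)
      moreover have "(\<Sum>m\<in>R - {k0}. d m * (cmod (c m))\<^sup>2) \<le> 0"
        by (intro sum_nonpos) (auto simp: R_def mult_nonpos_nonneg)
      ultimately show ?thesis by simp
    qed
    finally show "Re (kernel_form (\<lambda>i j. A $$ (i,j)) {..<n} (\<lambda>j. \<Sum>k\<in>R. c k * U $$ (j,k))) < 0" .
  qed
qed

lemma negative_subspace_le_sq_minus:
  fixes A :: "complex mat"
  assumes "A \<in> carrier_mat n n" "hermitian A"
    and "has_negative_subspace (\<lambda>i j. A $$ (i,j)) {..<n} p"
  shows "p \<le> sq_minus A"
proof (rule ccontr)
  assume "\<not> p \<le> sq_minus A"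
  obtain I :: "nat set" and X where I: "finite I" "card I = p"
    and neg: "\<And>c. \<exists>k\<in>I. c k \<noteq> 0 \<Longrightarrow>
      Re (kernel_form (\<lambda>i j. A $$ (i,j)) {..<n} (\<lambda>j. \<Sum>k\<in>I. c k * X k j)) < 0"
    using assms(3) by (rule has_negative_subspaceE) blast
  obtain U d where U: "unitary n U"
    and A: "A = U * mat_diag n (\<lambda>i. complex_of_real (d i)) * mat_adjoint U"
    using hermitian_unitary_diagonalization[OF assms(1,2)] by blast
  define R where "R = {i. i < n \<and> d i < 0}"
  have "card R < card I"
    using \<open>\<not> p \<le> sq_minus A\<close> I(2) sq_minus_unitary_diag[OF U A] by (simp add: R_def)
  \<comment> \<open>More generators than negative eigenvalues: some nontrivial combination is orthogonal to
    all eigenvectors with negative eigenvalue\<close>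
  then obtain c where c: "\<exists>k\<in>I. c k \<noteq> 0"
    and orth: "\<forall>m\<in>R. (\<Sum>k\<in>I. c k * (\<Sum>j<n. cnj (U $$ (j,m)) * X k j)) = 0"
    using homogeneous_system_nontrivial_solution[of R I "\<lambda>k m. \<Sum>j<n. cnj (U $$ (j,m)) * X k j"] I(1)
    by (auto simp: R_def)
  have "0 \<le> (\<Sum>m<n. d m * (cmod (\<Sum>j<n. cnj (U $$ (j,m)) * (\<Sum>k\<in>I. c k * X k j)))\<^sup>2)"
    unfolding sum_mult_linear_combination
  proof (intro sum_nonneg)
    fix m assume "m \<in> {..<n}"
    then show "0 \<le> d m * (cmod (\<Sum>k\<in>I. c k * (\<Sum>j<n. cnj (U $$ (j,m)) * X k j)))\<^sup>2"
      using orth by (cases "d m < 0") (auto simp: R_def)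
  qed
  also have "\<dots> = Re (kernel_form (\<lambda>i j. A $$ (i,j)) {..<n} (\<lambda>j. \<Sum>k\<in>I. c k * X k j))"
    by (rule Re_kernel_form_unitary_diag[OF unitary_carrier[OF U] A, symmetric])
  finally show False using neg[OF c] by simp
qed

lemma hermitian_negative_subspace_iff:
  fixes A :: "complex mat"
  assumes "A \<in> carrier_mat n n" "hermitian A"
  shows "has_negative_subspace (\<lambda>i j. A $$ (i,j)) {..<n} p \<longleftrightarrow> p \<le> sq_minus A"
  using negative_subspace_le_sq_minus[OF assms] has_negative_subspace_le
    hermitian_has_negative_subspace[OF assms] by blast

lemma sq_minus_hermitian_le:
  fixes A :: "complex mat"
  assumes "A \<in> carrier_mat n n" "hermitian A"
  shows "sq_minus A \<le> n"
proof -
  obtain U d where "unitary n U" "A = U * mat_diag n (\<lambda>i. complex_of_real (d i)) * mat_adjoint U"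
    using hermitian_unitary_diagonalization[OF assms] by blast
  then have "sq_minus A = card {i. i < n \<and> d i < 0}" by (rule sq_minus_unitary_diag)
  also have "\<dots> \<le> card {..<n}" by (intro card_mono) auto
  finally show ?thesis by simp
qed

section \<open>Pick matrices and the quantities k_n\<close>

definition pick_kernel :: "(complex \<Rightarrow> complex) \<Rightarrow> complex \<Rightarrow> complex \<Rightarrow> complex" where
  "pick_kernel f z w = (1 - f z * cnj (f w)) / (1 - z * cnj w)"

lemma pick_matrix_carrier: "pick_matrix f zs \<in> carrier_mat (length zs) (length zs)"
  by (simp add: pick_matrix_def)

lemma pick_matrix_index:
  "i < length zs \<Longrightarrow> j < length zs \<Longrightarrow> pick_matrix f zs $$ (i,j) = pick_kernel f (zs ! i) (zs ! j)"
  by (simp add: pick_matrix_def pick_kernel_def)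

lemma pick_matrix_cong: "(\<And>z. z \<in> set zs \<Longrightarrow> f z = g z) \<Longrightarrow> pick_matrix f zs = pick_matrix g zs"
  unfolding pick_matrix_def by (intro eq_matI) auto

lemma hermitian_pick_matrix: "hermitian (pick_matrix f zs)"
  unfolding hermitian_def
  by (rule eq_matI) (auto simp: pick_matrix_def mult.commute)

lemma pick_negative_subspace_iff:
  assumes "distinct zs"
  shows "has_negative_subspace (pick_kernel f) (set zs) p \<longleftrightarrow> p \<le> sq_minus (pick_matrix f zs)"
proof -
  have "set zs = (!) zs ` {..<length zs}" by (auto simp: in_set_conv_nth)
  moreover have "inj_on ((!) zs) {..<length zs}" using assms by (simp add: inj_on_nth)
  ultimately have "has_negative_subspace (pick_kernel f) (set zs) p \<longleftrightarrow>
      has_negative_subspace (\<lambda>i j. pick_kernel f (zs ! i) (zs ! j)) {..<length zs} p"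
    by (simp add: has_negative_subspace_reindex)
  also have "\<dots> \<longleftrightarrow> has_negative_subspace (\<lambda>i j. pick_matrix f zs $$ (i,j)) {..<length zs} p"
    by (rule has_negative_subspace_kernel_cong) (simp add: pick_matrix_index)
  also have "\<dots> \<longleftrightarrow> p \<le> sq_minus (pick_matrix f zs)"
    by (rule hermitian_negative_subspace_iff[OF pick_matrix_carrier hermitian_pick_matrix])
  finally show ?thesis .
qed

lemma sq_minus_pick_mono:
  assumes "distinct xs" "distinct ys" "set xs \<subseteq> set ys"
  shows "sq_minus (pick_matrix f xs) \<le> sq_minus (pick_matrix f ys)"
proof -
  have "has_negative_subspace (pick_kernel f) (set xs) (sq_minus (pick_matrix f xs))"
    using pick_negative_subspace_iff[OF assms(1)] by blast
  then have "has_negative_subspace (pick_kernel f) (set ys) (sq_minus (pick_matrix f xs))"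
    using assms(3) by (rule has_negative_subspace_mono[OF _ finite_set])
  then show ?thesis using pick_negative_subspace_iff[OF assms(2)] by blast
qed

lemma sq_minus_pick_le_removed:
  assumes "distinct xs" "distinct ys" "set xs \<subseteq> set ys"
  shows "sq_minus (pick_matrix f ys) \<le> sq_minus (pick_matrix f xs) + card (set ys - set xs)"
proof -
  have "has_negative_subspace (pick_kernel f) (set ys) (sq_minus (pick_matrix f ys))"
    using pick_negative_subspace_iff[OF assms(2)] by blast
  then have "has_negative_subspace (pick_kernel f) (set xs)
      (sq_minus (pick_matrix f ys) - card (set ys - set xs))"
    using assms(3) by (rule has_negative_subspace_restrict[OF _ finite_set])
  then show ?thesis using pick_negative_subspace_iff[OF assms(1)] by simp
qed

lemma sq_minus_pick_le_length: "sq_minus (pick_matrix f zs) \<le> length zs"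
  by (rule sq_minus_hermitian_le[OF pick_matrix_carrier hermitian_pick_matrix])

lemma sq_minus_pick_le_kappa:
  assumes "length zs = n" "distinct zs" "set zs \<subseteq> D"
  shows "sq_minus (pick_matrix f zs) \<le> kappa D f n"
proof -
  have "finite {sq_minus (pick_matrix f zs) | zs. length zs = n \<and> distinct zs \<and> set zs \<subseteq> D}"
    by (rule finite_subset[of _ "{..n}"]) (auto intro: order.trans[OF sq_minus_pick_le_length])
  then show ?thesis unfolding kappa_def using assms by (auto intro: cSup_upper bdd_above_finite)
qed

lemma kappa_leI:
  assumes "\<And>zs. length zs = n \<Longrightarrow> distinct zs \<Longrightarrow> set zs \<subseteq> D \<Longrightarrow> sq_minus (pick_matrix f zs) \<le> B"
  shows "kappa D f n \<le> B"
proof (cases "\<exists>zs. length zs = n \<and> distinct zs \<and> set zs \<subseteq> D")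
  case True
  then show ?thesis unfolding kappa_def using assms by (auto intro!: cSup_least)
next
  case False
  then have "{sq_minus (pick_matrix f zs) | zs. length zs = n \<and> distinct zs \<and> set zs \<subseteq> D} = {}"
    by blast
  then show ?thesis by (simp add: kappa_def Sup_nat_def)
qed

lemma kappa_mono:
  assumes "infinite D" "m \<le> n"
  shows "kappa D f m \<le> kappa D f n"
proof (rule kappa_leI)
  fix xs assume xs: "length xs = m" "distinct xs" "set xs \<subseteq> D"
  have "infinite (D - set xs)" using assms(1) by simp
  then obtain Y where Y: "finite Y" "card Y = n - m" "Y \<subseteq> D - set xs"
    using infinite_arbitrarily_large by blast
  obtain ys where ys: "set ys = Y" "distinct ys" using finite_distinct_list[OF Y(1)] by blast
  have "sq_minus (pick_matrix f xs) \<le> sq_minus (pick_matrix f (xs @ ys))"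
    by (rule sq_minus_pick_mono) (use xs ys Y in auto)
  also have "\<dots> \<le> kappa D f n"
    by (rule sq_minus_pick_le_kappa) (use xs ys Y assms(2) distinct_card[OF ys(2)] in auto)
  finally show "sq_minus (pick_matrix f xs) \<le> kappa D f n" .
qed

lemma infinite_disk_minus_discrete:
  assumes "disk_discrete L"
  shows "infinite (ball (0::complex) 1 - L)"
proof -
  have "uncountable (ball (0::complex) 1 - L)"
    using assms unfolding disk_discrete_def
    by (intro uncountable_minus_countable uncountable_ball) auto
  then show ?thesis using countable_finite by blast
qed

lemma kappa_le_extension:
  assumes "\<forall>z\<in>D. g z = f z"
  shows "kappa D f n \<le> kappa (D \<union> W) g n"
proof (rule kappa_leI)
  fix zs assume zs: "length zs = n" "distinct zs" "set zs \<subseteq> D"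
  then have "pick_matrix f zs = pick_matrix g zs" using assms by (intro pick_matrix_cong) auto
  then show "sq_minus (pick_matrix f zs) \<le> kappa (D \<union> W) g n"
    using zs by (auto intro: sq_minus_pick_le_kappa)
qed

lemma kappa_extension_le_Max:
  assumes "\<forall>z\<in>D. g z = f z" "finite W" "card W \<le> k"
  shows "kappa (D \<union> W) g n \<le> Max ((\<lambda>r. kappa D f (n - r) + r) ` {0..min k n})"
proof (rule kappa_leI)
  fix zs assume zs: "length zs = n" "distinct zs" "set zs \<subseteq> D \<union> W"
  define xs where "xs = filter (\<lambda>z. z \<in> D) zs"
  define r where "r = card (set zs - set xs)"
  have xs: "distinct xs" "set xs \<subseteq> set zs" "set xs \<subseteq> D" using zs by (auto simp: xs_def)
  have "set zs - set xs \<subseteq> W" using zs by (auto simp: xs_def)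
  then have "r \<le> k" unfolding r_def using assms(2,3) by (meson card_mono order.trans)
  have "length xs + r = n"
    using zs xs card_Diff_subset[OF finite_set xs(2)] card_mono[OF finite_set xs(2)]
    by (simp add: r_def distinct_card)
  have "sq_minus (pick_matrix g zs) \<le> sq_minus (pick_matrix g xs) + r"
    unfolding r_def by (rule sq_minus_pick_le_removed[OF xs(1) zs(2) xs(2)])
  also have "pick_matrix g xs = pick_matrix f xs" using assms(1) xs(3) by (intro pick_matrix_cong) auto
  also have "sq_minus (pick_matrix f xs) \<le> kappa D f (n - r)"
    using \<open>length xs + r = n\<close> xs by (intro sq_minus_pick_le_kappa) auto
  also have "kappa D f (n - r) + r \<le> Max ((\<lambda>r. kappa D f (n - r) + r) ` {0..min k n})"
    using \<open>r \<le> k\<close> \<open>length xs + r = n\<close> by (intro Max_ge) auto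
  finally show "sq_minus (pick_matrix g zs) \<le> Max ((\<lambda>r. kappa D f (n - r) + r) ` {0..min k n})"
    by simp
qed

lemma Max_kappa_shift_le:
  assumes "infinite D"
  shows "Max ((\<lambda>r. kappa D f (n - r) + r) ` {0..min k n}) \<le> kappa D f n + k"
  using kappa_mono[OF assms, of "n - _" n f] by (auto intro!: Max.boundedI add_mono)

lemma kappa_modification_le:
  assumes "finite Z" "\<forall>z\<in>D - Z. g z = f z"
  shows "kappa D g n \<le> kappa D f n + card Z"
proof (rule kappa_leI)
  fix zs assume zs: "length zs = n" "distinct zs" "set zs \<subseteq> D"
  define xs where "xs = filter (\<lambda>z. z \<notin> Z) zs"
  have xs: "distinct xs" "set xs \<subseteq> set zs" "set xs \<subseteq> D - Z" using zs by (auto simp: xs_def)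
  have "card (set zs - set xs) \<le> card Z"
    using assms(1) by (intro card_mono) (auto simp: xs_def)
  have "sq_minus (pick_matrix g zs) \<le> sq_minus (pick_matrix g xs) + card (set zs - set xs)"
    by (rule sq_minus_pick_le_removed[OF xs(1) zs(2) xs(2)])
  also have "pick_matrix g xs = pick_matrix f xs" using assms(2) xs(3) by (intro pick_matrix_cong) auto
  also have "sq_minus (pick_matrix f xs) \<le> sq_minus (pick_matrix f zs)"
    by (rule sq_minus_pick_mono[OF xs(1) zs(2) xs(2)])
  also have "\<dots> \<le> kappa D f n" by (rule sq_minus_pick_le_kappa[OF zs])
  finally show "sq_minus (pick_matrix g zs) \<le> kappa D f n + card Z"
    using \<open>card (set zs - set xs) \<le> card Z\<close> by simp
qed

theorem lemma2p3:
  fixes L :: "complex set" and f :: "complex \<Rightarrow> complex"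
  assumes "disk_discrete L"
  shows "(\<forall>(ws :: complex list) (g :: complex \<Rightarrow> complex) (n :: nat).
            set ws \<subseteq> ball 0 1 \<and> (\<forall>z\<in>ball 0 1 - L. g z = f z) \<and> n \<ge> 1 \<longrightarrow>
              kappa (ball 0 1 - L) f n \<le> kappa ((ball 0 1 - L) \<union> set ws) g n
            \<and> kappa ((ball 0 1 - L) \<union> set ws) g n
                \<le> Max ((\<lambda>r. kappa (ball 0 1 - L) f (n - r) + r) ` {0..min (length ws) n})
            \<and> Max ((\<lambda>r. kappa (ball 0 1 - L) f (n - r) + r) ` {0..min (length ws) n})
                \<le> kappa (ball 0 1 - L) f n + length ws)
       \<and> (\<forall>(zs :: complex list) (g :: complex \<Rightarrow> complex) (n :: nat).
            distinct zs \<and> set zs \<subseteq> ball 0 1 - L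
            \<and> (\<forall>z\<in>ball 0 1 - L - set zs. g z = f z) \<and> n \<ge> 1 \<longrightarrow>
              kappa (ball 0 1 - L) g n \<le> kappa (ball 0 1 - L) f n + length zs)"
proof -
  let ?D = "ball 0 1 - L"
  have D: "infinite ?D" by (rule infinite_disk_minus_discrete[OF assms])
  have extension: "kappa ?D f n \<le> kappa (?D \<union> set ws) g n
      \<and> kappa (?D \<union> set ws) g n \<le> Max ((\<lambda>r. kappa ?D f (n - r) + r) ` {0..min (length ws) n})
      \<and> Max ((\<lambda>r. kappa ?D f (n - r) + r) ` {0..min (length ws) n}) \<le> kappa ?D f n + length ws"
    if "\<forall>z\<in>?D. g z = f z" for ws g n
    using kappa_le_extension[OF that] kappa_extension_le_Max[OF that finite_set card_length]
      Max_kappa_shift_le[OF D] by blast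
  have modification: "kappa ?D g n \<le> kappa ?D f n + length zs"
    if "distinct zs" "\<forall>z\<in>?D - set zs. g z = f z" for zs g n
    using kappa_modification_le[OF finite_set that(2)] distinct_card[OF that(1)] by simp
  show ?thesis using extension modification by blast
qed

end
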